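(* Identify the tangent space of $\mathbb OP^{(1,1)}$ at $P_0=[1,0,0]$ with $\mathbb O^2$ via the chart $[1,u,v]\mapsto(u,v)$, a pair $(a,b)$ corresponding to the tangent vector with $du=a$, $dv=b$. Then the Riemann curvature tensor of $(\mathbb OP^{(1,1)},g)$ at $P_0$ is $$\begin{aligned}R\big((a,b),(c,d),(e,f),(g,h)\big)=&\,4\langle a,e\rangle\langle c,g\rangle-4\langle c,e\rangle\langle a,g\rangle+4\langle b,f\rangle\langle d,h\rangle-4\langle d,f\rangle\langle b,h\rangle\\&+\langle e\bar d,g\bar b\rangle-\langle e\bar b,g\bar d\rangle+\langle c\bar f,a\bar h\rangle-\langle a\bar f,c\bar h\rangle+\langle a\bar d-c\bar b,\ g\bar f-e\bar h\rangle.\end{aligned}$$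
   Context: Octonions $\mathbb O=\mathbb H\oplus\mathbb H$ with product $(q_1,q_2)(p_1,p_2)=(q_1p_1-\bar p_2q_2,\ p_2q_1+q_2\bar p_1)$, conjugation $\overline{(q_1,q_2)}=(\bar q_1,-q_2)$, $\langle a,b\rangle=\mathrm{Re}(a\bar b)$, $|a|^2=\langle a,a\rangle$. $\mathbb OP^{(1,1)}=(U_1\cup U_2)/_\sim$ with $U_1=\{(1,u,v):1+|u|^2-|v|^2>0\}$, $U_2=\{(u,1,v):|u|^2+1-|v|^2>0\}$ and $[a,b,c]\sim[d,e,f]$ iff $(a,b,c)=(d\lambda,e\lambda,f\lambda)$ for some $\lambda\ne0$; charts $[1,u,v]\mapsto(u,v)$, $[u,1,v]\mapsto(u,v)$. Metric $g$ on each chart, for tangent vector $(du,dv)=(\xi,\eta)$: $ds^2=\frac{|\xi|^2(1-|v|^2)-|\eta|^2(1+|u|^2)+2\mathrm{Re}[(u\bar v)(\eta\bar\xi)]}{(1+|u|^2-|v|^2)^2}$. Curvature convention: in coordinates in which first derivatives of the metric vanish at the point, $R_{\alpha\beta\gamma\delta}=\tfrac12\big[\partial_\alpha\partial_\delta g_{\beta\gamma}+\partial_\beta\partial_\gamma g_{\alpha\delta}-\partial_\beta\partial_\delta g_{\alpha\gamma}-\partial_\alpha\partial_\gamma g_{\beta\delta}\big]$. *)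

theory Defs
  imports "HOL-Analysis.Analysis"
begin

text \<open>Quaternions as 4-tuples of reals (real part first), octonions as pairs of
quaternions (Cayley--Dickson).  Product types carry the real vector space structure.\<close>

type_synonym quat = "real \<times> real \<times> real \<times> real"
type_synonym oct = "quat \<times> quat"

fun qmul :: "quat \<Rightarrow> quat \<Rightarrow> quat" where
  "qmul (a1, b1, c1, d1) (a2, b2, c2, d2) =
     (a1*a2 - b1*b2 - c1*c2 - d1*d2,
      a1*b2 + b1*a2 + c1*d2 - d1*c2,
      a1*c2 - b1*d2 + c1*a2 + d1*b2,
      a1*d2 + b1*c2 - c1*b2 + d1*a2)"

fun qconj :: "quat \<Rightarrow> quat" where
  "qconj (a, b, c, d) = (a, -b, -c, -d)"

fun omul :: "oct \<Rightarrow> oct \<Rightarrow> oct" where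
  "omul (q1, q2) (p1, p2) =
     (qmul q1 p1 - qmul (qconj p2) q2, qmul p2 q1 + qmul q2 (qconj p1))"

fun oconj :: "oct \<Rightarrow> oct" where
  "oconj (q1, q2) = (qconj q1, - q2)"

definition ore :: "oct \<Rightarrow> real" where
  "ore x = fst (fst x)"

definition oinner :: "oct \<Rightarrow> oct \<Rightarrow> real" where
  "oinner a b = ore (omul a (oconj b))"

definition onorm2 :: "oct \<Rightarrow> real" where
  "onorm2 a = oinner a a"

text \<open>The metric $ds^2$ in the chart $[1,u,v]\mapsto(u,v)$: point $p=(u,v)$,
tangent vector $(\xi,\eta)$.\<close>
definition ds2 :: "oct \<times> oct \<Rightarrow> oct \<times> oct \<Rightarrow> real" where
  "ds2 p X = (let u = fst p; v = snd p; \<xi> = fst X; \<eta> = snd X in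
     (onorm2 \<xi> * (1 - onorm2 v) - onorm2 \<eta> * (1 + onorm2 u)
       + 2 * ore (omul (omul u (oconj v)) (omul \<eta> (oconj \<xi>))))
     / (1 + onorm2 u - onorm2 v)\<^sup>2)"

definition gmet :: "oct \<times> oct \<Rightarrow> oct \<times> oct \<Rightarrow> oct \<times> oct \<Rightarrow> real" where
  "gmet p X Y = (ds2 p (X + Y) - ds2 p (X - Y)) / 4"

definition d2 :: "(oct \<times> oct \<Rightarrow> real) \<Rightarrow> oct \<times> oct \<Rightarrow> oct \<times> oct \<Rightarrow> real" where
  "d2 F X W = deriv (\<lambda>t. deriv (\<lambda>s. F (s *\<^sub>R X + t *\<^sub>R W)) 0) 0"

text \<open>Curvature tensor at $P_0$ (chart origin) via the stated convention,
extended multilinearly: $R(X,Y,Z,W)=X^\alpha Y^\beta Z^\gamma W^\delta R_{\alpha\beta\gamma\delta}$.\<close>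
definition curvP0 :: "oct \<times> oct \<Rightarrow> oct \<times> oct \<Rightarrow> oct \<times> oct \<Rightarrow> oct \<times> oct \<Rightarrow> real" where
  "curvP0 X Y Z W = (1/2) *
     (d2 (\<lambda>p. gmet p Y Z) X W + d2 (\<lambda>p. gmet p X W) Y Z
      - d2 (\<lambda>p. gmet p X Z) Y W - d2 (\<lambda>p. gmet p Y W) X Z)"

end

theory Submission
  imports Defs
begin

(* On a plane through the origin of the chart, each coefficient of the metric is a quotient
   N / D^2 in which N is a constant plus a quadratic form and D is 1 plus a quadratic form.
   Hence the first derivatives of the metric vanish at P0, and a mixed second derivative there
   is the bilinear part of N minus 2 N(0) times the bilinear part of D.  Substituting these into
   the curvature formula, the remaining octonionic terms are collapsed by the polarized
   composition law  <x conj y, z conj w> + <x conj w, z conj y> = 2 <x,z> <y,w>,  which follows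
   from |x y|^2 = |x|^2 |y|^2 because the octonion inner product is the Euclidean one on R^8. *)

definition bivariate_quadratic :: "real \<Rightarrow> real \<Rightarrow> real \<Rightarrow> real \<Rightarrow> real \<Rightarrow> real \<Rightarrow> real" where
  "bivariate_quadratic c0 c1 c2 c3 s t = c0 + c1 * s\<^sup>2 + c2 * s * t + c3 * t\<^sup>2"

lemma partial_deriv_quadratic_quotient:
  assumes "1 + r3 * t\<^sup>2 \<noteq> 0"
  shows "((\<lambda>s. bivariate_quadratic a0 a1 a2 a3 s t / (bivariate_quadratic 1 r1 r2 r3 s t)\<^sup>2)
    has_real_derivative (a2 * t * (1 + r3 * t\<^sup>2) - 2 * (a0 + a3 * t\<^sup>2) * r2 * t) / (1 + r3 * t\<^sup>2) ^ 3)
    (at 0)"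
proof -
  have "((\<lambda>s. bivariate_quadratic a0 a1 a2 a3 s t / (bivariate_quadratic 1 r1 r2 r3 s t)\<^sup>2)
    has_real_derivative
      (a2 * t * (1 + r3 * t\<^sup>2)\<^sup>2 - (a0 + a3 * t\<^sup>2) * (2 * (r2 * t * (1 + r3 * t\<^sup>2))))
      / (1 + r3 * t\<^sup>2) ^ 4) (at 0)"
    unfolding bivariate_quadratic_def
    by (rule DERIV_cong, (rule derivative_eq_intros refl)+) (use assms in simp_all)
  moreover have "(b * t * x\<^sup>2 - c * (2 * (r * t * x))) / x ^ 4 = (b * t * x - 2 * c * r * t) / x ^ 3"
    if "x \<noteq> 0" for x b c r :: real
    using that by (simp add: field_simps power2_eq_square power3_eq_cube power4_eq_xxxx)
  ultimately show ?thesis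
    using assms by simp
qed

lemma mixed_deriv_quadratic_quotient:
  "deriv (\<lambda>t. deriv (\<lambda>s. bivariate_quadratic a0 a1 a2 a3 s t / (bivariate_quadratic 1 r1 r2 r3 s t)\<^sup>2) 0) 0
     = a2 - 2 * a0 * r2"
proof -
  have "((\<lambda>t. (a2 * t * (1 + r3 * t\<^sup>2) - 2 * (a0 + a3 * t\<^sup>2) * r2 * t) / (1 + r3 * t\<^sup>2) ^ 3)
      has_real_derivative a2 - 2 * a0 * r2) (at 0)"
    by (rule DERIV_cong, (rule derivative_eq_intros refl)+) simp_all
  moreover have "open {t::real. 1 + r3 * t\<^sup>2 \<noteq> 0}"
    by (intro open_Collect_neq continuous_intros)
  ultimately have "((\<lambda>t. deriv (\<lambda>s. bivariate_quadratic a0 a1 a2 a3 s t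
        / (bivariate_quadratic 1 r1 r2 r3 s t)\<^sup>2) 0) has_real_derivative a2 - 2 * a0 * r2) (at 0)"
    by (rule has_field_derivative_transform_within_open)
       (simp_all add: DERIV_imp_deriv[OF partial_deriv_quadratic_quotient])
  then show ?thesis
    by (rule DERIV_imp_deriv)
qed

lemma oct_cases: obtains x1 x2 x3 x4 x5 x6 x7 x8
  where "(x::oct) = ((x1, x2, x3, x4), (x5, x6, x7, x8))"
  by (metis prod.exhaust)

lemma bilinear_omul: "bilinear omul"
  unfolding bilinear_def
proof (intro conjI allI linearI)
  fix x y z :: oct and r :: real
  show "omul x (y + z) = omul x y + omul x z" "omul x (r *\<^sub>R y) = r *\<^sub>R omul x y"
    "omul (y + z) x = omul y x + omul z x" "omul (r *\<^sub>R y) x = r *\<^sub>R omul y x"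
    by (cases x rule: oct_cases; cases y rule: oct_cases; cases z rule: oct_cases; simp add: algebra_simps)+
qed

lemma linear_oconj: "linear oconj"
proof (rule linearI)
  fix x y :: oct and r :: real
  show "oconj (x + y) = oconj x + oconj y" "oconj (r *\<^sub>R x) = r *\<^sub>R oconj x"
    by (cases x rule: oct_cases; cases y rule: oct_cases; simp)+
qed

lemmas omul_linear_simps =
  bilinear_ladd[OF bilinear_omul] bilinear_radd[OF bilinear_omul]
  bilinear_lsub[OF bilinear_omul] bilinear_rsub[OF bilinear_omul]
  bilinear_lmul[OF bilinear_omul] bilinear_rmul[OF bilinear_omul]
  linear_add[OF linear_oconj] linear_diff[OF linear_oconj] linear_scale[OF linear_oconj]

lemma oconj_oconj [simp]: "oconj (oconj x) = x"
  by (cases x rule: oct_cases) simp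

lemma oconj_omul: "oconj (omul x y) = omul (oconj y) (oconj x)"
  by (cases x rule: oct_cases; cases y rule: oct_cases) (simp add: algebra_simps)

lemma oinner_eq_inner: "oinner x y = inner x y"
  by (cases x rule: oct_cases; cases y rule: oct_cases) (simp add: oinner_def ore_def algebra_simps)

lemma ore_omul: "ore (omul x y) = inner x (oconj y)"
  by (metis oinner_def oinner_eq_inner oconj_oconj)

lemma inner_oconj_oconj [simp]: "inner (oconj x) (oconj y) = inner x y"
  by (cases x rule: oct_cases; cases y rule: oct_cases) simp

lemma inner_self_omul: "inner (omul x y) (omul x y) = inner x x * inner y y"
  by (cases x rule: oct_cases; cases y rule: oct_cases) (simp add: algebra_simps)

lemma inner_omul_right_same: "inner (omul x y) (omul z y) = inner x z * inner y y"
  using inner_self_omul[of "x + z" y]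
  by (simp add: omul_linear_simps inner_self_omul inner_commute algebra_simps)

lemma inner_omul_polarized:
  "inner (omul x y) (omul z w) + inner (omul x w) (omul z y) = 2 * inner x z * inner y w"
  using inner_omul_right_same[of x "y + w" z]
  by (simp add: omul_linear_simps inner_omul_right_same inner_commute algebra_simps)

lemma gmet_Pair:
  "gmet (u, v) (x, y) (x', y') =
    (inner x x' * (1 - inner v v) - inner y y' * (1 + inner u u)
      + inner (omul u (oconj v)) (omul x' (oconj y) + omul x (oconj y')))
    / (1 + inner u u - inner v v)\<^sup>2"
proof -
  have ds2_diff: "ds2 (u, v) ((x, y) + (x', y')) - ds2 (u, v) ((x, y) - (x', y')) =
    4 * ((inner x x' * (1 - inner v v) - inner y y' * (1 + inner u u)
      + inner (omul u (oconj v)) (omul x' (oconj y) + omul x (oconj y')))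
    / (1 + inner u u - inner v v)\<^sup>2)"
    unfolding ds2_def Let_def onorm2_def oinner_eq_inner ore_omul oconj_omul oconj_oconj
    by (simp add: omul_linear_simps inner_commute algebra_simps flip: diff_divide_distrib add_divide_distrib)
  show ?thesis
    unfolding gmet_def ds2_diff by (rule nonzero_mult_div_cancel_left) simp
qed

lemma gmet_on_plane:
  fixes u1 u2 v1 v2 p1 p2 q1 q2 :: oct and s t :: real
  defines "K \<equiv> omul q1 (oconj p2) + omul p1 (oconj q2)"
  shows "gmet (s *\<^sub>R (u1, u2) + t *\<^sub>R (v1, v2)) (p1, p2) (q1, q2) =
    bivariate_quadratic (inner p1 q1 - inner p2 q2)
      (- inner p1 q1 * inner u2 u2 - inner p2 q2 * inner u1 u1 + inner (omul u1 (oconj u2)) K)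
      (- 2 * inner p1 q1 * inner u2 v2 - 2 * inner p2 q2 * inner u1 v1
         + inner (omul u1 (oconj v2) + omul v1 (oconj u2)) K)
      (- inner p1 q1 * inner v2 v2 - inner p2 q2 * inner v1 v1 + inner (omul v1 (oconj v2)) K) s t
    / (bivariate_quadratic 1 (inner u1 u1 - inner u2 u2) (2 * inner u1 v1 - 2 * inner u2 v2)
         (inner v1 v1 - inner v2 v2) s t)\<^sup>2"
proof -
  have point: "s *\<^sub>R (u1, u2) + t *\<^sub>R (v1, v2) = (s *\<^sub>R u1 + t *\<^sub>R v1, s *\<^sub>R u2 + t *\<^sub>R v2)"
    by simp
  have numerator:
    "inner p1 q1 * (1 - inner (s *\<^sub>R u2 + t *\<^sub>R v2) (s *\<^sub>R u2 + t *\<^sub>R v2))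
       - inner p2 q2 * (1 + inner (s *\<^sub>R u1 + t *\<^sub>R v1) (s *\<^sub>R u1 + t *\<^sub>R v1))
       + inner (omul (s *\<^sub>R u1 + t *\<^sub>R v1) (oconj (s *\<^sub>R u2 + t *\<^sub>R v2))) K
     = bivariate_quadratic (inner p1 q1 - inner p2 q2)
      (- inner p1 q1 * inner u2 u2 - inner p2 q2 * inner u1 u1 + inner (omul u1 (oconj u2)) K)
      (- 2 * inner p1 q1 * inner u2 v2 - 2 * inner p2 q2 * inner u1 v1
         + inner (omul u1 (oconj v2) + omul v1 (oconj u2)) K)
      (- inner p1 q1 * inner v2 v2 - inner p2 q2 * inner v1 v1 + inner (omul v1 (oconj v2)) K) s t"
    unfolding bivariate_quadratic_def
    by (simp add: omul_linear_simps inner_commute algebra_simps power2_eq_square)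
  have denominator:
    "1 + inner (s *\<^sub>R u1 + t *\<^sub>R v1) (s *\<^sub>R u1 + t *\<^sub>R v1) - inner (s *\<^sub>R u2 + t *\<^sub>R v2) (s *\<^sub>R u2 + t *\<^sub>R v2)
     = bivariate_quadratic 1 (inner u1 u1 - inner u2 u2) (2 * inner u1 v1 - 2 * inner u2 v2)
         (inner v1 v1 - inner v2 v2) s t"
    unfolding bivariate_quadratic_def
    by (simp add: inner_commute algebra_simps power2_eq_square)
  show ?thesis
    unfolding point gmet_Pair K_def[symmetric] numerator denominator ..
qed

lemma d2_gmet:
  "d2 (\<lambda>p. gmet p (p1, p2) (q1, q2)) (u1, u2) (v1, v2) =
     - 2 * inner p1 q1 * inner u2 v2 - 2 * inner p2 q2 * inner u1 v1
     + inner (omul u1 (oconj v2) + omul v1 (oconj u2)) (omul q1 (oconj p2) + omul p1 (oconj q2))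
     - 2 * (inner p1 q1 - inner p2 q2) * (2 * inner u1 v1 - 2 * inner u2 v2)"
  unfolding d2_def gmet_on_plane by (rule mixed_deriv_quadratic_quotient)

lemma gmet_has_derivative_0_at_origin:
  "((\<lambda>t. gmet (t *\<^sub>R Z) X Y) has_real_derivative 0) (at 0)"
proof -
  have "gmet (t *\<^sub>R Z) X Y = gmet (t *\<^sub>R (fst Z, snd Z) + 0 *\<^sub>R (0, 0)) (fst X, snd X) (fst Y, snd Y)"
    for t :: real
    by (simp flip: zero_prod_def)
  then show ?thesis
    unfolding gmet_on_plane using partial_deriv_quadratic_quotient[where t = 0] by simp
qed

lemma curvP0_Pair:
  "curvP0 (a, b) (c, d) (e, f) (g, h) =
      4 * inner a e * inner c g - 4 * inner c e * inner a g
    + 4 * inner b f * inner d h - 4 * inner d f * inner b h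
    + inner (omul e (oconj d)) (omul g (oconj b))
    - inner (omul e (oconj b)) (omul g (oconj d))
    + inner (omul c (oconj f)) (omul a (oconj h))
    - inner (omul a (oconj f)) (omul c (oconj h))
    + inner (omul a (oconj d) - omul c (oconj b)) (omul g (oconj f) - omul e (oconj h))"
  using inner_omul_polarized[of a "oconj h" e "oconj d"] inner_omul_polarized[of g "oconj b" c "oconj f"]
    inner_omul_polarized[of c "oconj h" e "oconj b"] inner_omul_polarized[of g "oconj d" a "oconj f"]
  unfolding curvP0_def d2_gmet
  by (simp add: omul_linear_simps inner_commute algebra_simps)

theorem corollary7p5:
  fixes a b c d e f g h :: oct
  shows "(\<forall>X Y Z. ((\<lambda>t. gmet (t *\<^sub>R Z) X Y) has_real_derivative 0) (at 0))
    \<and> curvP0 (a, b) (c, d) (e, f) (g, h) =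
        4 * oinner a e * oinner c g - 4 * oinner c e * oinner a g
      + 4 * oinner b f * oinner d h - 4 * oinner d f * oinner b h
      + oinner (omul e (oconj d)) (omul g (oconj b))
      - oinner (omul e (oconj b)) (omul g (oconj d))
      + oinner (omul c (oconj f)) (omul a (oconj h))
      - oinner (omul a (oconj f)) (omul c (oconj h))
      + oinner (omul a (oconj d) - omul c (oconj b)) (omul g (oconj f) - omul e (oconj h))"
  using gmet_has_derivative_0_at_origin curvP0_Pair by (simp add: oinner_eq_inner)

end
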